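(* Let $p>5$ be a prime, $q=p^h$, and let $\mathcal{F}$ be the projective closure of $ax^ny^m+bx^n+cy^m=1$ over $\mathbb{F}_q$, where $a,b,c\in\mathbb{F}_q^*$, $c\ne-\frac ab$. Suppose $n=m=\frac{q-1}{p^r-1}$ with $r<h$, $r\mid h$, and $a,b,c\in\mathbb{F}_{p^r}$. Then $N_q(\mathcal{F})=n^2(p^r-3)+4n$.
   Context: $N_q(\mathcal{F})$ denotes the number of $\mathbb{F}_q$-rational points of $\mathcal{F}$ counted on its nonsingular model, i.e. singular points contribute their number of $\mathbb{F}_q$-rational branches (equivalently, the number of degree-one places of $\mathbb{F}_q(\mathcal{F})$). *)

theory Defs
  imports "HOL-Computational_Algebra.Formal_Power_Series"
begin

text \<open>Branches of a projective plane curve G(X,Y,Z) = 0 over a field K, via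
  formal power series (classical branch representations, as in
  Hirschfeld--Korchmaros--Torres).\<close>

type_synonym 'a triple = "'a fps \<times> 'a fps \<times> 'a fps"

definition scale_reparam :: "'a::field fps \<Rightarrow> 'a fps \<Rightarrow> 'a triple \<Rightarrow> 'a triple" where
  "scale_reparam \<rho> \<sigma> r = (case r of (X, Y, Z) \<Rightarrow>
      (\<rho> * (X oo \<sigma>), \<rho> * (Y oo \<sigma>), \<rho> * (Z oo \<sigma>)))"

definition normalised_triple :: "'a::field triple \<Rightarrow> bool" where
  "normalised_triple r = (case r of (X, Y, Z) \<Rightarrow> fps_nth X 0 \<noteq> 0 \<or> fps_nth Y 0 \<noteq> 0 \<or> fps_nth Z 0 \<noteq> 0)"

definition constant_point :: "'a::field triple \<Rightarrow> bool" where
  "constant_point r = (case r of (X, Y, Z) \<Rightarrow>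
      (\<exists>\<rho> u v w. fps_nth \<rho> 0 \<noteq> 0 \<and> X = \<rho> * fps_const u \<and> Y = \<rho> * fps_const v \<and> Z = \<rho> * fps_const w))"

definition branch_rep :: "('a::field fps \<Rightarrow> 'a fps \<Rightarrow> 'a fps \<Rightarrow> 'a fps) \<Rightarrow> 'a triple \<Rightarrow> bool" where
  "branch_rep G r = (normalised_triple r \<and> \<not> constant_point r \<and>
      (case r of (X, Y, Z) \<Rightarrow> G X Y Z = 0))"

definition primitive_rep :: "'a::field triple \<Rightarrow> bool" where
  "primitive_rep r = (\<not> (\<exists>s \<rho> \<sigma>. fps_nth \<rho> 0 \<noteq> 0 \<and> fps_nth \<sigma> 0 = 0 \<and> fps_nth \<sigma> 1 = 0 \<and> r = scale_reparam \<rho> \<sigma> s))"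

definition rep_equiv :: "'a::field triple \<Rightarrow> 'a triple \<Rightarrow> bool" where
  "rep_equiv r r' = (\<exists>\<rho> \<sigma>. fps_nth \<rho> 0 \<noteq> 0 \<and> fps_nth \<sigma> 0 = 0 \<and> fps_nth \<sigma> 1 \<noteq> 0 \<and> r' = scale_reparam \<rho> \<sigma> r)"

definition rational_branches :: "('a::field fps \<Rightarrow> 'a fps \<Rightarrow> 'a fps \<Rightarrow> 'a fps) \<Rightarrow> 'a triple set set" where
  "rational_branches G =
     (let B = {r. branch_rep G r \<and> primitive_rep r}
      in (\<lambda>r. {r' \<in> B. rep_equiv r r'}) ` B)"

text \<open>N_q of the curve: number of K-rational branches = number of points of the
  nonsingular model over K (K = F_q, the finite base field).\<close>
definition Nq :: "('a::{finite,field} fps \<Rightarrow> 'a fps \<Rightarrow> 'a fps \<Rightarrow> 'a fps) \<Rightarrow> nat" where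
  "Nq G = card (rational_branches G)"

definition curve_F :: "'a::field \<Rightarrow> 'a \<Rightarrow> 'a \<Rightarrow> nat \<Rightarrow> nat \<Rightarrow> 'a fps \<Rightarrow> 'a fps \<Rightarrow> 'a fps \<Rightarrow> 'a fps" where
  "curve_F a b c n m X Y Z =
     fps_const a * X ^ n * Y ^ m + fps_const b * X ^ n * Z ^ m + fps_const c * Y ^ m * Z ^ n - Z ^ (n + m)"

end

theory Submission
  imports Defs "HOL-Number_Theory.Residues" "HOL-Computational_Algebra.Polynomial"
begin

(* A branch of the curve is determined by its centre together with, at the two singular points
   (0:1:0) and (1:0:0) at infinity, the limit t of X/Z (resp. Y/Z), which satisfies
   a t^N + c = 0 (resp. a t^N + b = 0).  Conversely every such datum carries exactly one branch:
   locally one coordinate is an N-th root of a unit power series, and N-th roots exist because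
   N = 1 in F_q.  So N_q is the number of affine points plus 2N.  The map (x, y) |-> (x^N, y^N)
   is N^2-to-one from the affine points with xy <> 0 onto the points of the conic
   a u v + b u + c v = 1 with u, v in the multiplicative group of F_(p^r); the conic is the graph
   of a Moebius transformation defined over F_(p^r) and has p^r - 3 such points.  The points with
   x = 0 or y = 0 contribute N each. *)

unbundle fps_syntax

section \<open>Power series\<close>

lemma fps_one_plus_X_power_nth_1: "((1 + fps_X) ^ N :: 'a::comm_ring_1 fps) $ 1 = of_nat N"
  by (induction N) (simp_all add: fps_mult_nth_1 fps_nth_power_0 algebra_simps)

text \<open>Taking \<open>N\<close>-th roots needs only \<open>N \<noteq> 0\<close> in the field: \<open>(1 + X) \<circ> inv((1 + X)^N - 1)\<close>
  is an \<open>N\<close>-th root of \<open>1 + X\<close>, and composing it with \<open>W / w^N - 1\<close> gives one of \<open>W\<close>.\<close>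
lemma fps_nth_root_exists:
  fixes W :: "'a::field fps"
  assumes "W $ 0 = w ^ N" "w \<noteq> 0" "of_nat N \<noteq> (0::'a)"
  shows "\<exists>R. R ^ N = W \<and> R $ 0 = w"
proof -
  define g :: "'a fps" where "g = (1 + fps_X) ^ N - 1"
  have g0: "g $ 0 = 0" by (simp add: g_def fps_nth_power_0)
  have g1: "g $ 1 \<noteq> 0"
    using assms(3) fps_one_plus_X_power_nth_1[of N, where 'a='a] by (simp add: g_def)
  define E where "E = (1 + fps_X) oo fps_inv g"
  have E0: "E $ 0 = 1" and inv0: "fps_inv g $ 0 = 0" by (simp_all add: E_def fps_inv_def)
  have "E ^ N = (g + 1) oo fps_inv g"
    unfolding E_def fps_compose_power[OF inv0] by (simp add: g_def)
  also have "\<dots> = 1 + fps_X"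
    by (simp add: fps_compose_add_distrib fps_inv_right[OF g0 g1])
  finally have EN: "E ^ N = 1 + fps_X" .
  define V where "V = fps_const (inverse (w ^ N)) * W - 1"
  have V0: "V $ 0 = 0" using assms(1,2) by (simp add: V_def)
  define R where "R = fps_const w * (E oo V)"
  have "R ^ N = fps_const (w ^ N) * (E ^ N oo V)"
    by (simp add: R_def power_mult_distrib fps_compose_power[OF V0])
  also have "\<dots> = fps_const (w ^ N) * (1 + V)"
    by (simp add: EN fps_compose_add_distrib V0)
  also have "\<dots> = W"
    using assms(2) by (simp add: V_def flip: mult.assoc)
  finally show ?thesis using E0 by (intro exI[of _ R]) (simp add: R_def)
qed

lemma fps_power_eq_imp_eq:
  fixes u v :: "'a::field fps"
  assumes "u ^ N = v ^ N" "u $ 0 = v $ 0" "v $ 0 \<noteq> 0" "of_nat N \<noteq> (0::'a)"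
  shows "u = v"
proof -
  define S where "S = (\<Sum>i<N. v ^ (N - Suc i) * u ^ i)"
  have "(u - v) * S = 0"
    using assms(1) power_diff_sumr2[of u N v] by (simp add: S_def)
  moreover have "S $ 0 = of_nat N * (v $ 0) ^ (N - 1)"
    using assms(2) by (simp add: S_def fps_sum_nth fps_nth_power_0 flip: power_add)
  hence "S \<noteq> 0" using assms(3,4) by (metis fps_nonzero_nth mult_eq_0_iff power_eq_0_iff)
  ultimately show ?thesis by simp
qed

lemma fps_mult_unit_eq_iff:
  fixes f g D :: "'a::field fps"
  assumes "D $ 0 \<noteq> 0"
  shows "f * D = g \<longleftrightarrow> f = g * inverse D"
  using inverse_mult_eq_1[OF assms] inverse_mult_eq_1'[OF assms]
  by (metis mult.assoc mult_1_right)

lemma fps_compose_nth_1: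
  fixes F \<sigma> :: "'a::field fps"
  assumes "\<sigma> $ 0 = 0"
  shows "(F oo \<sigma>) $ 1 = F $ 1 * \<sigma> $ 1"
  using assms by (simp add: fps_compose_nth numeral_2_eq_2)

lemma fps_dvd_if_power_eq_units:
  fixes x z U V :: "'a::field fps"
  assumes "x ^ N * U = z ^ N * V" "U $ 0 \<noteq> 0" "V $ 0 \<noteq> 0" "z \<noteq> 0" "N > 0"
  shows "\<exists>T. x = z * T"
proof -
  have "x \<noteq> 0" using assms by (auto simp: power_0_left)
  have "U \<noteq> 0" "V \<noteq> 0" using assms(2,3) by auto
  have "N * subdegree x = subdegree (x ^ N * U)"
    using \<open>x \<noteq> 0\<close> \<open>U \<noteq> 0\<close> by (simp add: subdegree_mult subdegree_power subdegree_eq_0[OF assms(2)])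
  also have "\<dots> = N * subdegree z"
    using assms(1,4) \<open>V \<noteq> 0\<close> by (simp add: subdegree_mult subdegree_power subdegree_eq_0[OF assms(3)])
  finally have "subdegree z \<le> subdegree x" using assms(5) by simp
  thus ?thesis using subdegree_le_imp_dvd_left_divring[OF assms(4)] by (auto elim: dvdE)
qed

definition fps_nth_root :: "nat \<Rightarrow> 'a::field fps \<Rightarrow> 'a \<Rightarrow> 'a fps" where
  "fps_nth_root N W w = (THE R. R ^ N = W \<and> R $ 0 = w)"

lemma fps_nth_root:
  fixes W :: "'a::field fps"
  assumes "W $ 0 = w ^ N" "w \<noteq> 0" "of_nat N \<noteq> (0::'a)"
  shows "fps_nth_root N W w ^ N = W" "fps_nth_root N W w $ 0 = w"
proof -
  have "\<exists>!R. R ^ N = W \<and> R $ 0 = w"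
    using fps_nth_root_exists[OF assms] fps_power_eq_imp_eq assms(2,3) by metis
  from theI'[OF this] show "fps_nth_root N W w ^ N = W" "fps_nth_root N W w $ 0 = w"
    unfolding fps_nth_root_def by auto
qed

lemma fps_nth_root_compose_eq:
  fixes T F \<sigma> :: "'a::field fps"
  assumes "T ^ N = F oo \<sigma>" "\<sigma> $ 0 = 0" "F $ 0 = (T $ 0) ^ N" "T $ 0 \<noteq> 0" "of_nat N \<noteq> (0::'a)"
  shows "T = fps_nth_root N F (T $ 0) oo \<sigma>"
proof (rule fps_power_eq_imp_eq)
  show "T ^ N = (fps_nth_root N F (T $ 0) oo \<sigma>) ^ N"
    using fps_nth_root(1)[OF assms(3-5)] assms(1) by (simp add: fps_compose_power[OF assms(2)])
qed (use fps_nth_root(2)[OF assms(3-5)] assms(4,5) in simp_all)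

section \<open>Classifying branch representations\<close>

lemma scale_reparam_scale_reparam:
  fixes \<rho>1 \<rho>2 \<sigma>1 \<sigma>2 :: "'a::field fps"
  assumes "\<sigma>1 $ 0 = 0" "\<sigma>2 $ 0 = 0"
  shows "scale_reparam \<rho>2 \<sigma>2 (scale_reparam \<rho>1 \<sigma>1 s) =
    scale_reparam (\<rho>2 * (\<rho>1 oo \<sigma>2)) (\<sigma>1 oo \<sigma>2) s"
  using assms
  by (cases s) (simp add: scale_reparam_def fps_compose_mult_distrib fps_compose_assoc mult.assoc)

lemma scale_reparam_1_X [simp]: "scale_reparam 1 fps_X s = (s :: 'a::field triple)"
  by (cases s) (simp add: scale_reparam_def)

lemma constant_point_iff_scale_reparam_0:
  "constant_point r \<longleftrightarrow> (\<exists>\<rho> s. \<rho> $ 0 \<noteq> 0 \<and> r = scale_reparam \<rho> 0 s)"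
proof
  assume "constant_point r"
  then obtain \<rho> u v w where "\<rho> $ 0 \<noteq> 0" "r = (\<rho> * fps_const u, \<rho> * fps_const v, \<rho> * fps_const w)"
    by (cases r) (auto simp: constant_point_def)
  thus "\<exists>\<rho> s. \<rho> $ 0 \<noteq> 0 \<and> r = scale_reparam \<rho> 0 s"
    by (intro exI[of _ \<rho>] exI[of _ "(fps_const u, fps_const v, fps_const w)"])
      (simp add: scale_reparam_def)
next
  assume "\<exists>\<rho> s. \<rho> $ 0 \<noteq> 0 \<and> r = scale_reparam \<rho> 0 s"
  thus "constant_point r"
    by (auto simp: constant_point_def scale_reparam_def split: prod.splits)
qed

text \<open>A reparametrisation with \<open>\<sigma> $ 1 = 0\<close> kills the linear coefficient of every ratio
  of coordinates; this rules out both non-primitive and constant representations.\<close>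
lemma primitive_nonconstant_if_ratio:
  fixes r :: "'a::field triple" and P :: "'a fps"
  assumes P1: "P $ 1 \<noteq> 0"
    and ratio: "\<And>\<rho> \<sigma> s. r = scale_reparam \<rho> \<sigma> s \<Longrightarrow>
      \<exists>A B. \<rho> * (A oo \<sigma>) = 1 \<and> \<rho> * (B oo \<sigma>) = P"
  shows "primitive_rep r" "\<not> constant_point r"
proof -
  have no_flat: False if flat: "r = scale_reparam \<rho> \<sigma> s" "\<sigma> $ 0 = 0" "\<sigma> $ 1 = 0" for \<rho> \<sigma> s
  proof -
    obtain A B where AB: "\<rho> * (A oo \<sigma>) = 1" "\<rho> * (B oo \<sigma>) = P"
      using ratio[OF flat(1)] by blast
    have "P * (A oo \<sigma>) = B oo \<sigma>"
      using AB by (metis mult.left_commute mult_1_right)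
    hence "(P * (A oo \<sigma>)) $ 1 = 0"
      using fps_compose_nth_1[OF flat(2)] flat(3) by simp
    moreover have "(A oo \<sigma>) $ 1 = 0"
      using fps_compose_nth_1[OF flat(2)] flat(3) by simp
    moreover have "A $ 0 \<noteq> 0"
      using arg_cong[OF AB(1), of "\<lambda>f. f $ 0"] by auto
    ultimately show False using P1 by (simp add: fps_mult_nth_1)
  qed
  show "primitive_rep r"
    unfolding primitive_rep_def using no_flat by blast
  show "\<not> constant_point r"
  proof
    assume "constant_point r"
    then obtain \<rho> s where "r = scale_reparam \<rho> 0 s"
      using constant_point_iff_scale_reparam_0 by blast
    thus False using no_flat[of \<rho> 0 s] by simp
  qed
qed

lemma primitive_rep_reparam_nth_1:
  "primitive_rep (scale_reparam \<rho> \<sigma> s) \<Longrightarrow> \<rho> $ 0 \<noteq> 0 \<Longrightarrow> \<sigma> $ 0 = 0 \<Longrightarrow> \<sigma> $ 1 \<noteq> 0"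
  unfolding primitive_rep_def by blast

locale branch_classification =
  fixes G :: "'a::field fps \<Rightarrow> 'a fps \<Rightarrow> 'a fps \<Rightarrow> 'a fps"
    and label :: "'a triple \<Rightarrow> 'l" and standard :: "'l \<Rightarrow> 'a triple" and L :: "'l set"
  assumes normal_form: "\<And>r. branch_rep G r \<Longrightarrow> label r \<in> L \<and>
      (\<exists>\<rho> \<sigma>. \<rho> $ 0 \<noteq> 0 \<and> \<sigma> $ 0 = 0 \<and> r = scale_reparam \<rho> \<sigma> (standard (label r)))"
    and standard_rep: "\<And>l. l \<in> L \<Longrightarrow> branch_rep G (standard l) \<and> primitive_rep (standard l)"
    and label_standard: "\<And>l \<rho> \<sigma>. l \<in> L \<Longrightarrow> \<rho> $ 0 \<noteq> 0 \<Longrightarrow> \<sigma> $ 0 = 0 \<Longrightarrow>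
      \<not> constant_point (scale_reparam \<rho> \<sigma> (standard l)) \<Longrightarrow>
      label (scale_reparam \<rho> \<sigma> (standard l)) = l"
begin

abbreviation "reps \<equiv> {r. branch_rep G r \<and> primitive_rep r}"

lemma label_rep_equiv:
  assumes "r \<in> reps" "r' \<in> reps" "rep_equiv r r'"
  shows "label r' = label r"
proof -
  obtain \<rho>' \<sigma>' where \<rho>'\<sigma>': "\<rho>' $ 0 \<noteq> 0" "\<sigma>' $ 0 = 0" "r' = scale_reparam \<rho>' \<sigma>' r"
    using assms(3) unfolding rep_equiv_def by blast
  obtain \<rho> \<sigma> where \<rho>\<sigma>: "\<rho> $ 0 \<noteq> 0" "\<sigma> $ 0 = 0"
    "r = scale_reparam \<rho> \<sigma> (standard (label r))" and "label r \<in> L"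
    using normal_form assms(1) by blast
  have "r' = scale_reparam (\<rho>' * (\<rho> oo \<sigma>')) (\<sigma> oo \<sigma>') (standard (label r))"
    using \<rho>'\<sigma>'(3) \<rho>\<sigma>(3) scale_reparam_scale_reparam[OF \<rho>\<sigma>(2) \<rho>'\<sigma>'(2)] by metis
  moreover have "\<not> constant_point r'" using assms(2) by (simp add: branch_rep_def)
  ultimately show ?thesis
    using label_standard[OF \<open>label r \<in> L\<close>] \<rho>'\<sigma>'(1,2) \<rho>\<sigma>(1,2) by simp
qed

lemma rep_equiv_if_same_label:
  assumes "r \<in> reps" "r' \<in> reps" "label r = label r'"
  shows "rep_equiv r r'"
proof -
  define S where "S = standard (label r)"
  obtain \<rho> \<sigma> where \<rho>\<sigma>: "\<rho> $ 0 \<noteq> 0" "\<sigma> $ 0 = 0" "r = scale_reparam \<rho> \<sigma> S"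
    using normal_form assms(1) unfolding S_def by blast
  obtain \<rho>' \<sigma>' where \<rho>'\<sigma>': "\<rho>' $ 0 \<noteq> 0" "\<sigma>' $ 0 = 0" "r' = scale_reparam \<rho>' \<sigma>' S"
    using normal_form assms(2) unfolding S_def assms(3) by blast
  have \<sigma>1: "\<sigma> $ 1 \<noteq> 0"
    using primitive_rep_reparam_nth_1[of \<rho> \<sigma> S] assms(1) \<rho>\<sigma> by simp
  have \<sigma>'1: "\<sigma>' $ 1 \<noteq> 0"
    using primitive_rep_reparam_nth_1[of \<rho>' \<sigma>' S] assms(2) \<rho>'\<sigma>' by simp
  define \<tau> where "\<tau> = fps_inv \<sigma> oo \<sigma>'"
  have inv0: "fps_inv \<sigma> $ 0 = 0" by (simp add: fps_inv_def)
  have "(fps_inv \<sigma> oo \<sigma>) $ 1 = 1" using fps_inv[OF \<rho>\<sigma>(2) \<sigma>1] by simp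
  hence "fps_inv \<sigma> $ 1 \<noteq> 0" using fps_compose_nth_1[OF \<rho>\<sigma>(2), of "fps_inv \<sigma>"] by auto
  hence \<tau>: "\<tau> $ 0 = 0" "\<tau> $ 1 \<noteq> 0"
    using inv0 fps_compose_nth_1[OF \<rho>'\<sigma>'(2), of "fps_inv \<sigma>"] \<sigma>'1 by (simp_all add: \<tau>_def)
  have "\<sigma> oo \<tau> = (\<sigma> oo fps_inv \<sigma>) oo \<sigma>'"
    unfolding \<tau>_def by (rule fps_compose_assoc[OF \<rho>'\<sigma>'(2) inv0])
  hence \<sigma>\<tau>: "\<sigma> oo \<tau> = \<sigma>'" using fps_inv_right[OF \<rho>\<sigma>(2) \<sigma>1] \<rho>'\<sigma>'(2) by simp
  define \<mu> where "\<mu> = \<rho>' * inverse (\<rho> oo \<tau>)"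
  have \<rho>\<tau>0: "(\<rho> oo \<tau>) $ 0 \<noteq> 0" using \<rho>\<sigma>(1) by simp
  have "scale_reparam \<mu> \<tau> r = scale_reparam (\<mu> * (\<rho> oo \<tau>)) (\<sigma> oo \<tau>) S"
    using \<rho>\<sigma>(3) scale_reparam_scale_reparam[OF \<rho>\<sigma>(2) \<tau>(1)] by simp
  also have "\<dots> = r'"
    using \<rho>'\<sigma>'(3) \<sigma>\<tau> inverse_mult_eq_1[OF \<rho>\<tau>0] by (simp add: \<mu>_def mult.assoc)
  finally show ?thesis
    unfolding rep_equiv_def using \<rho>'\<sigma>'(1) \<rho>\<tau>0 \<tau> by (intro exI[of _ \<mu>] exI[of _ \<tau>]) (simp add: \<mu>_def)
qed

lemma label_image: "label ` reps = L"
proof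
  show "label ` reps \<subseteq> L" using normal_form by blast
  show "L \<subseteq> label ` reps"
  proof
    fix l assume "l \<in> L"
    hence "standard l \<in> reps" and "label (standard l) = l"
      using standard_rep label_standard[of l 1 fps_X] by (auto simp: branch_rep_def)
    thus "l \<in> label ` reps" by force
  qed
qed

lemma card_rational_branches: "card (rational_branches G) = card L"
proof -
  define fibre where "fibre l = {r \<in> reps. label r = l}" for l
  have "rational_branches G = (\<lambda>r. fibre (label r)) ` reps"
  proof -
    have "{r' \<in> reps. rep_equiv r r'} = fibre (label r)" if "r \<in> reps" for r
      using label_rep_equiv[OF that] rep_equiv_if_same_label[OF that] unfolding fibre_def by auto
    thus ?thesis unfolding rational_branches_def Let_def by (rule image_cong[OF refl])
  qed
  also have "\<dots> = fibre ` L"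
    by (simp add: image_image flip: label_image)
  finally have "rational_branches G = fibre ` L" .
  moreover have "inj_on fibre L"
  proof (rule inj_onI)
    fix l l' assume "l \<in> L" "fibre l = fibre l'"
    then obtain r where "r \<in> reps" "label r = l" "r \<in> fibre l'"
      using label_image unfolding fibre_def by blast
    thus "l = l'" unfolding fibre_def by simp
  qed
  ultimately show ?thesis by (simp add: card_image)
qed

end

section \<open>Branches of the curve\<close>

definition swap_xy :: "'a triple \<Rightarrow> 'a triple" where
  "swap_xy r = (case r of (X, Y, Z) \<Rightarrow> (Y, X, Z))"

lemma swap_xy_swap_xy [simp]: "swap_xy (swap_xy r) = r"
  by (cases r) (simp add: swap_xy_def)

lemma scale_reparam_swap_xy: "scale_reparam \<rho> \<sigma> (swap_xy s) = swap_xy (scale_reparam \<rho> \<sigma> s)"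
  by (cases s) (simp add: swap_xy_def scale_reparam_def)

lemma curve_F_swap: "curve_F a b c N N Y X Z = curve_F a c b N N X Y Z"
  unfolding curve_F_def by (simp add: algebra_simps)

lemma branch_rep_swap_xy:
  "branch_rep (curve_F a b c N N) (swap_xy r) = branch_rep (curve_F a c b N N) r"
  by (cases r) (auto simp: branch_rep_def swap_xy_def normalised_triple_def constant_point_def curve_F_swap)

lemma primitive_rep_swap_xy: "primitive_rep (swap_xy r) = primitive_rep r"
proof -
  have "swap_xy r = scale_reparam \<rho> \<sigma> s \<longleftrightarrow> r = scale_reparam \<rho> \<sigma> (swap_xy s)" for \<rho> \<sigma> s
    by (metis scale_reparam_swap_xy swap_xy_swap_xy)
  thus ?thesis unfolding primitive_rep_def by (metis swap_xy_swap_xy)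
qed

definition affine_point :: "'a::field \<Rightarrow> 'a \<Rightarrow> 'a \<Rightarrow> nat \<Rightarrow> 'a \<Rightarrow> 'a \<Rightarrow> bool" where
  "affine_point a b c N x y \<longleftrightarrow> a * x ^ N * y ^ N + b * x ^ N + c * y ^ N = 1"

lemma affine_point_swap: "affine_point a c b N y x = affine_point a b c N x y"
  unfolding affine_point_def by (simp add: algebra_simps)

lemma affine_point_denominator:
  fixes a b c x y :: "'a::field"
  assumes "affine_point a b c N x y" "a + b * c \<noteq> 0"
  shows "a * x ^ N + c \<noteq> 0"
proof
  assume "a * x ^ N + c = 0"
  moreover have "b * x ^ N + (a * x ^ N + c) * y ^ N = 1"
    using assms(1) unfolding affine_point_def by (simp add: algebra_simps)
  ultimately have "b * x ^ N = 1" by simp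
  hence "a + b * c = b * (a * x ^ N + c)" by (simp add: algebra_simps)
  with \<open>a * x ^ N + c = 0\<close> assms(2) show False by simp
qed

definition affine_rhs :: "'a::field \<Rightarrow> 'a \<Rightarrow> 'a \<Rightarrow> nat \<Rightarrow> 'a fps \<Rightarrow> 'a fps" where
  "affine_rhs a b c N x =
     (1 - fps_const b * x ^ N) * inverse (fps_const a * x ^ N + fps_const c)"

lemma affine_equation_iff:
  fixes x y :: "'a::field fps"
  assumes "a * (x $ 0) ^ N + c \<noteq> 0"
  shows "fps_const a * x ^ N * y ^ N + fps_const b * x ^ N + fps_const c * y ^ N = 1 \<longleftrightarrow>
    y ^ N = affine_rhs a b c N x"
proof -
  define D where "D = fps_const a * x ^ N + fps_const c"
  have "D $ 0 \<noteq> 0" using assms by (simp add: D_def fps_nth_power_0)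
  have "fps_const a * x ^ N * y ^ N + fps_const b * x ^ N + fps_const c * y ^ N = 1 \<longleftrightarrow>
      y ^ N * D = 1 - fps_const b * x ^ N"
    by (auto simp: D_def algebra_simps)
  also have "\<dots> \<longleftrightarrow> y ^ N = affine_rhs a b c N x"
    unfolding fps_mult_unit_eq_iff[OF \<open>D $ 0 \<noteq> 0\<close>] by (simp add: affine_rhs_def D_def)
  finally show ?thesis .
qed

lemma affine_rhs_compose:
  fixes x \<sigma> :: "'a::field fps"
  assumes "\<sigma> $ 0 = 0" "a * (x $ 0) ^ N + c \<noteq> 0"
  shows "affine_rhs a b c N x oo \<sigma> = affine_rhs a b c N (x oo \<sigma>)"
proof -
  have D0: "(fps_const a * x ^ N + fps_const c) $ 0 \<noteq> 0"
    using assms(2) by (simp add: fps_nth_power_0)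
  show ?thesis
    unfolding affine_rhs_def fps_compose_mult_distrib[OF assms(1)] fps_inverse_compose[OF assms(1) D0]
    by (simp add: fps_compose_add_distrib fps_compose_sub_distrib fps_compose_power[OF assms(1)]
        flip: fps_const_mult_apply_left)
qed

lemma affine_rhs_nth_0:
  fixes x y :: "'a::field"
  assumes "affine_point a b c N x y" "a + b * c \<noteq> 0"
  shows "affine_rhs a b c N (fps_const x + fps_X) $ 0 = y ^ N"
proof -
  have "a * x ^ N + c \<noteq> 0" by (rule affine_point_denominator[OF assms])
  moreover have "y ^ N * (a * x ^ N + c) = 1 - b * x ^ N"
    using assms(1) unfolding affine_point_def by (simp add: algebra_simps)
  ultimately show ?thesis
    by (simp add: affine_rhs_def fps_nth_power_0 field_simps)
qed

definition affine_branch :: "'a::field \<Rightarrow> 'a \<Rightarrow> 'a \<Rightarrow> nat \<Rightarrow> 'a \<Rightarrow> 'a \<Rightarrow> 'a triple" where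
  "affine_branch a b c N x y =
     (fps_const x + fps_X, fps_nth_root N (affine_rhs a b c N (fps_const x + fps_X)) y, 1)"

lemma curve_F_affine_chart:
  "curve_F a b c N N (Z * x) (Z * y) Z = Z ^ (N + N) *
     (fps_const a * x ^ N * y ^ N + fps_const b * x ^ N + fps_const c * y ^ N - 1)"
  unfolding curve_F_def by (simp add: algebra_simps power_mult_distrib power_add)

lemma affine_point_of_curve:
  fixes X Y Z :: "'a::field fps"
  assumes "curve_F a b c N N X Y Z = 0" "Z $ 0 \<noteq> 0"
  shows "affine_point a b c N (X $ 0 / Z $ 0) (Y $ 0 / Z $ 0)"
proof -
  have "(curve_F a b c N N X Y Z) $ 0 = 0" using assms(1) by simp
  thus ?thesis using assms(2)
    by (simp add: curve_F_def affine_point_def fps_nth_power_0 field_simps power_add power_divide)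
qed

context
  fixes a b c :: "'a::field" and N :: nat
  assumes abc: "a + b * c \<noteq> 0" and N: "of_nat N \<noteq> (0::'a)"
begin

lemma affine_branch_root:
  assumes "affine_point a b c N x y" "y \<noteq> 0"
  shows "fps_nth_root N (affine_rhs a b c N (fps_const x + fps_X)) y ^ N =
      affine_rhs a b c N (fps_const x + fps_X)"
    "fps_nth_root N (affine_rhs a b c N (fps_const x + fps_X)) y $ 0 = y"
  using fps_nth_root[OF affine_rhs_nth_0[OF assms(1) abc] assms(2) N] by auto

lemma affine_branch_rep:
  assumes "affine_point a b c N x y" "y \<noteq> 0"
  shows "branch_rep (curve_F a b c N N) (affine_branch a b c N x y)"
    "primitive_rep (affine_branch a b c N x y)"
proof -
  let ?u = "fps_const x + fps_X :: 'a fps"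
  let ?R = "fps_nth_root N (affine_rhs a b c N ?u) y"
  have "a * (?u $ 0) ^ N + c \<noteq> 0" using affine_point_denominator[OF assms(1) abc] by simp
  hence "fps_const a * ?u ^ N * ?R ^ N + fps_const b * ?u ^ N + fps_const c * ?R ^ N = 1"
    using affine_equation_iff affine_branch_root(1)[OF assms] by blast
  hence "curve_F a b c N N ?u ?R 1 = 0"
    using curve_F_affine_chart[of a b c N 1 ?u ?R] by simp
  moreover have ratio: "\<exists>A B. \<rho> * (A oo \<sigma>) = 1 \<and> \<rho> * (B oo \<sigma>) = ?u"
    if "affine_branch a b c N x y = scale_reparam \<rho> \<sigma> s" for \<rho> \<sigma> s
    using that by (cases s) (auto simp: affine_branch_def scale_reparam_def)
  ultimately show "branch_rep (curve_F a b c N N) (affine_branch a b c N x y)"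
    "primitive_rep (affine_branch a b c N x y)"
    using primitive_nonconstant_if_ratio[of ?u, OF _ ratio]
    by (simp_all add: branch_rep_def affine_branch_def normalised_triple_def)
qed

lemma affine_normal_form:
  fixes X Y Z :: "'a fps"
  assumes curve: "curve_F a b c N N X Y Z = 0" and Z0: "Z $ 0 \<noteq> 0" and Y0: "Y $ 0 \<noteq> 0"
  shows "\<exists>\<sigma>. \<sigma> $ 0 = 0 \<and>
    (X, Y, Z) = scale_reparam Z \<sigma> (affine_branch a b c N (X $ 0 / Z $ 0) (Y $ 0 / Z $ 0))"
proof -
  define x where "x = X * inverse Z"
  define y where "y = Y * inverse Z"
  have X: "X = Z * x" and Y: "Y = Z * y"
    using inverse_mult_eq_1'[OF Z0] by (simp_all add: x_def y_def mult.left_commute)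
  have x0: "x $ 0 = X $ 0 / Z $ 0" and y0: "y $ 0 = Y $ 0 / Z $ 0"
    by (simp_all add: x_def y_def divide_inverse)
  have "Z \<noteq> 0" using Z0 by auto
  hence eq: "fps_const a * x ^ N * y ^ N + fps_const b * x ^ N + fps_const c * y ^ N = 1"
    using curve curve_F_affine_chart[of a b c N Z x y] X Y by simp
  define \<sigma> where "\<sigma> = x - fps_const (x $ 0)"
  have \<sigma>0: "\<sigma> $ 0 = 0" by (simp add: \<sigma>_def)
  have x\<sigma>: "x = (fps_const (x $ 0) + fps_X) oo \<sigma>"
    using \<sigma>0 by (simp add: fps_compose_add_distrib \<sigma>_def)
  have on': "affine_point a b c N (x $ 0) (y $ 0)"
    using affine_point_of_curve[OF curve Z0] x0 y0 by simp
  have den: "a * (x $ 0) ^ N + c \<noteq> 0"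
    using affine_point_denominator[OF on' abc] .
  have "y ^ N = affine_rhs a b c N (fps_const (x $ 0) + fps_X) oo \<sigma>"
    using eq affine_equation_iff[OF den] affine_rhs_compose[OF \<sigma>0, of a "fps_const (x $ 0) + fps_X"] x\<sigma> den
    by simp
  moreover have "affine_rhs a b c N (fps_const (x $ 0) + fps_X) $ 0 = (y $ 0) ^ N"
    by (rule affine_rhs_nth_0[OF on' abc])
  moreover have "y $ 0 \<noteq> 0" using Y0 Z0 y0 by simp
  ultimately have "y = fps_nth_root N (affine_rhs a b c N (fps_const (x $ 0) + fps_X)) (y $ 0) oo \<sigma>"
    by (rule fps_nth_root_compose_eq[OF _ \<sigma>0 _ _ N])
  hence "(X, Y, Z) = scale_reparam Z \<sigma> (affine_branch a b c N (x $ 0) (y $ 0))"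
    using X Y x\<sigma> by (simp add: affine_branch_def scale_reparam_def)
  thus ?thesis using \<sigma>0 x0 y0 by auto
qed

end

text \<open>The value of \<open>(X/Z)^N\<close> near the points at infinity, as a function of \<open>z = Z/Y\<close>.\<close>
definition infinite_rhs :: "'a::field \<Rightarrow> 'a \<Rightarrow> 'a \<Rightarrow> nat \<Rightarrow> 'a fps \<Rightarrow> 'a fps" where
  "infinite_rhs a b c N z = (z ^ N - fps_const c) * inverse (fps_const a + fps_const b * z ^ N)"

lemma infinite_equation_iff:
  fixes z T :: "'a::field fps"
  assumes "a + b * (z $ 0) ^ N \<noteq> 0"
  shows "fps_const a * T ^ N + fps_const b * T ^ N * z ^ N + fps_const c - z ^ N = 0 \<longleftrightarrow>
    T ^ N = infinite_rhs a b c N z"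
proof -
  define D where "D = fps_const a + fps_const b * z ^ N"
  have "D $ 0 \<noteq> 0" using assms by (simp add: D_def fps_nth_power_0)
  have "fps_const a * T ^ N + fps_const b * T ^ N * z ^ N + fps_const c - z ^ N = 0 \<longleftrightarrow>
      T ^ N * D = z ^ N - fps_const c"
    by (auto simp: D_def algebra_simps)
  also have "\<dots> \<longleftrightarrow> T ^ N = infinite_rhs a b c N z"
    unfolding fps_mult_unit_eq_iff[OF \<open>D $ 0 \<noteq> 0\<close>] by (simp add: infinite_rhs_def D_def)
  finally show ?thesis .
qed

lemma infinite_rhs_compose:
  fixes z \<sigma> :: "'a::field fps"
  assumes "\<sigma> $ 0 = 0" "a + b * (z $ 0) ^ N \<noteq> 0"
  shows "infinite_rhs a b c N z oo \<sigma> = infinite_rhs a b c N (z oo \<sigma>)"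
proof -
  have D0: "(fps_const a + fps_const b * z ^ N) $ 0 \<noteq> 0"
    using assms(2) by (simp add: fps_nth_power_0)
  show ?thesis
    unfolding infinite_rhs_def fps_compose_mult_distrib[OF assms(1)] fps_inverse_compose[OF assms(1) D0]
    by (simp add: fps_compose_add_distrib fps_compose_sub_distrib fps_compose_power[OF assms(1)]
        flip: fps_const_mult_apply_left)
qed

lemma infinite_rhs_nth_0:
  fixes t :: "'a::field"
  assumes "a * t ^ N + c = 0" "a \<noteq> 0" "N > 0"
  shows "infinite_rhs a b c N fps_X $ 0 = t ^ N"
  using assms by (simp add: infinite_rhs_def field_simps add_eq_0_iff2)

definition infinite_branch :: "'a::field \<Rightarrow> 'a \<Rightarrow> 'a \<Rightarrow> nat \<Rightarrow> 'a \<Rightarrow> 'a triple" where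
  "infinite_branch a b c N t = (fps_X * fps_nth_root N (infinite_rhs a b c N fps_X) t, 1, fps_X)"

definition leading_ratio :: "'a::field fps \<Rightarrow> 'a fps \<Rightarrow> 'a" where
  "leading_ratio X Z = X $ subdegree Z / Z $ subdegree Z"

lemma leading_ratio_mult: "Z \<noteq> 0 \<Longrightarrow> leading_ratio (Z * T) Z = T $ 0"
  by (simp add: leading_ratio_def)

lemma curve_F_infinite_chart:
  "curve_F a b c N N (Y * x) Y (Y * z) = Y ^ (N + N) *
     (fps_const a * x ^ N + fps_const b * x ^ N * z ^ N + fps_const c * z ^ N - z ^ (N + N))"
  unfolding curve_F_def by (simp add: algebra_simps power_mult_distrib power_add)

context
  fixes a b c :: "'a::field" and N :: nat
  assumes a: "a \<noteq> 0" and c: "c \<noteq> 0" and N: "of_nat N \<noteq> (0::'a)"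
begin

lemma N_pos: "N > 0"
  using N by (cases N) auto

lemma infinite_branch_root:
  assumes "a * t ^ N + c = 0"
  shows "fps_nth_root N (infinite_rhs a b c N fps_X) t ^ N = infinite_rhs a b c N fps_X"
    "fps_nth_root N (infinite_rhs a b c N fps_X) t $ 0 = t"
proof -
  have "t \<noteq> 0" using assms c N_pos by (auto simp: power_0_left)
  thus "fps_nth_root N (infinite_rhs a b c N fps_X) t ^ N = infinite_rhs a b c N fps_X"
    "fps_nth_root N (infinite_rhs a b c N fps_X) t $ 0 = t"
    using fps_nth_root[OF infinite_rhs_nth_0[OF assms a N_pos] _ N] by auto
qed

lemma infinite_branch_rep:
  assumes "a * t ^ N + c = 0"
  shows "branch_rep (curve_F a b c N N) (infinite_branch a b c N t)"
    "primitive_rep (infinite_branch a b c N t)"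
proof -
  let ?R = "fps_nth_root N (infinite_rhs a b c N fps_X) t"
  have "a + b * (fps_X $ 0 :: 'a) ^ N \<noteq> 0" using a N_pos by (simp add: power_0_left)
  hence "fps_const a * ?R ^ N + fps_const b * ?R ^ N * fps_X ^ N + fps_const c - fps_X ^ N = 0"
    using infinite_equation_iff infinite_branch_root(1)[OF assms] by blast
  moreover have "curve_F a b c N N (fps_X * ?R) 1 fps_X = fps_X ^ N *
      (fps_const a * ?R ^ N + fps_const b * ?R ^ N * fps_X ^ N + fps_const c - fps_X ^ N)"
    unfolding curve_F_def by (simp add: algebra_simps power_mult_distrib power_add)
  ultimately have "curve_F a b c N N (fps_X * ?R) 1 fps_X = 0" by simp
  moreover have ratio: "\<exists>A B. \<rho> * (A oo \<sigma>) = 1 \<and> \<rho> * (B oo \<sigma>) = fps_X"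
    if "infinite_branch a b c N t = scale_reparam \<rho> \<sigma> s" for \<rho> \<sigma> s
    using that by (cases s) (auto simp: infinite_branch_def scale_reparam_def intro: sym)
  ultimately show "branch_rep (curve_F a b c N N) (infinite_branch a b c N t)"
    "primitive_rep (infinite_branch a b c N t)"
    using primitive_nonconstant_if_ratio[of fps_X, OF _ ratio]
    by (simp_all add: branch_rep_def infinite_branch_def normalised_triple_def)
qed

lemma infinite_chart_factor:
  fixes x z :: "'a fps"
  assumes eq: "fps_const a * x ^ N + fps_const b * x ^ N * z ^ N + fps_const c * z ^ N - z ^ (N + N) = 0"
    and z0: "z $ 0 = 0" and "z \<noteq> 0"
  shows "\<exists>T. x = z * T \<and> T ^ N = infinite_rhs a b c N fps_X oo z"
proof -
  define U where "U = fps_const a + fps_const b * z ^ N"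
  have U0: "U $ 0 \<noteq> 0" and V0: "(z ^ N - fps_const c) $ 0 \<noteq> 0"
    using a c z0 N_pos by (simp_all add: U_def fps_nth_power_0 power_0_left)
  have "x ^ N * U = z ^ N * (z ^ N - fps_const c)"
    using eq by (simp add: U_def algebra_simps power_add)
  then obtain T where xT: "x = z * T"
    using fps_dvd_if_power_eq_units[OF _ U0 V0 \<open>z \<noteq> 0\<close> N_pos] by blast
  have "z ^ N * (fps_const a * T ^ N + fps_const b * T ^ N * z ^ N + fps_const c - z ^ N) = 0"
    using eq unfolding xT by (simp add: algebra_simps power_mult_distrib power_add)
  hence "fps_const a * T ^ N + fps_const b * T ^ N * z ^ N + fps_const c - z ^ N = 0"
    using \<open>z \<noteq> 0\<close> by simp
  moreover have den: "a + b * (z $ 0) ^ N \<noteq> 0" using a z0 N_pos by (simp add: power_0_left)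
  ultimately have "T ^ N = infinite_rhs a b c N fps_X oo z"
    using infinite_equation_iff[OF den] infinite_rhs_compose[OF z0, of a b fps_X] z0 N_pos
    by (simp add: power_0_left)
  with xT show ?thesis by blast
qed

lemma infinite_normal_form:
  fixes X Y Z :: "'a fps"
  assumes curve: "curve_F a b c N N X Y Z = 0" and Y0: "Y $ 0 \<noteq> 0" and Z0: "Z $ 0 = 0"
    and nonconst: "\<not> constant_point (X, Y, Z)"
  shows "a * leading_ratio X Z ^ N + c = 0"
    "\<exists>\<sigma>. \<sigma> $ 0 = 0 \<and> (X, Y, Z) = scale_reparam Y \<sigma> (infinite_branch a b c N (leading_ratio X Z))"
proof -
  define x where "x = X * inverse Y"
  define z where "z = Z * inverse Y"
  have X: "X = Y * x" and Z: "Z = Y * z"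
    using inverse_mult_eq_1'[OF Y0] by (simp_all add: x_def z_def mult.left_commute)
  have z0: "z $ 0 = 0" using Z0 by (simp add: z_def)
  have "Y \<noteq> 0" using Y0 by auto
  hence eq: "fps_const a * x ^ N + fps_const b * x ^ N * z ^ N + fps_const c * z ^ N - z ^ (N + N) = 0"
    using curve curve_F_infinite_chart[of a b c N Y x z] X Z by simp
  have "z \<noteq> 0"
  proof
    assume "z = 0"
    hence "x = 0" using eq a N_pos by (simp add: power_0_left)
    hence "(X, Y, Z) = (Y * fps_const 0, Y * fps_const 1, Y * fps_const 0)"
      using X Z \<open>z = 0\<close> by simp
    with nonconst Y0 show False unfolding constant_point_def by blast
  qed
  then obtain T where xT: "x = z * T" and TN: "T ^ N = infinite_rhs a b c N fps_X oo z"
    using infinite_chart_factor[OF eq z0] by blast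
  have ratio: "leading_ratio X Z = T $ 0"
    using leading_ratio_mult[of Z T] X Z xT \<open>Y \<noteq> 0\<close> \<open>z \<noteq> 0\<close> by (simp add: mult.assoc)
  have "(T $ 0) ^ N = - c / a"
    using arg_cong[OF TN, of "\<lambda>f. f $ 0"] N_pos
    by (simp add: fps_nth_power_0 infinite_rhs_def power_0_left divide_inverse)
  thus on: "a * leading_ratio X Z ^ N + c = 0"
    using ratio a by (simp add: field_simps)
  have "T $ 0 \<noteq> 0" using on ratio c N_pos by (auto simp: power_0_left)
  hence "T = fps_nth_root N (infinite_rhs a b c N fps_X) (T $ 0) oo z"
    using fps_nth_root_compose_eq[OF TN z0 _ _ N] infinite_rhs_nth_0[OF on[unfolded ratio] a N_pos]
    by simp
  hence "(X, Y, Z) = scale_reparam Y z (infinite_branch a b c N (T $ 0))"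
    using X Z xT z0 by (simp add: infinite_branch_def scale_reparam_def fps_compose_mult_distrib mult_ac)
  thus "\<exists>\<sigma>. \<sigma> $ 0 = 0 \<and> (X, Y, Z) = scale_reparam Y \<sigma> (infinite_branch a b c N (leading_ratio X Z))"
    using z0 ratio by auto
qed

end

datatype 'a branch_label = Affine 'a 'a | Inf_Y 'a | Inf_X 'a

text \<open>\<open>Inf_Y t\<close> labels the branch centred at \<open>(0:1:0)\<close> along which \<open>X/Z \<rightarrow> t\<close>, and
  \<open>Inf_X t\<close> the branch centred at \<open>(1:0:0)\<close> along which \<open>Y/Z \<rightarrow> t\<close>.\<close>
definition branch_label :: "'a::field triple \<Rightarrow> 'a branch_label" where
  "branch_label r = (case r of (X, Y, Z) \<Rightarrow>
     if Z $ 0 \<noteq> 0 then Affine (X $ 0 / Z $ 0) (Y $ 0 / Z $ 0)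
     else if Y $ 0 \<noteq> 0 then Inf_Y (leading_ratio X Z)
     else Inf_X (leading_ratio Y Z))"

definition branch_labels :: "'a::field \<Rightarrow> 'a \<Rightarrow> 'a \<Rightarrow> nat \<Rightarrow> 'a branch_label set" where
  "branch_labels a b c N = {Affine x y | x y. affine_point a b c N x y}
     \<union> Inf_Y ` {t. a * t ^ N + c = 0} \<union> Inf_X ` {t. a * t ^ N + b = 0}"

definition standard_branch :: "'a::field \<Rightarrow> 'a \<Rightarrow> 'a \<Rightarrow> nat \<Rightarrow> 'a branch_label \<Rightarrow> 'a triple" where
  "standard_branch a b c N l = (case l of
      Affine x y \<Rightarrow> if y \<noteq> 0 then affine_branch a b c N x y else swap_xy (affine_branch a c b N y x)
    | Inf_Y t \<Rightarrow> infinite_branch a b c N t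
    | Inf_X t \<Rightarrow> swap_xy (infinite_branch a c b N t))"

lemma branch_label_scale_reparam_affine:
  "\<rho> $ 0 \<noteq> 0 \<Longrightarrow> \<sigma> $ 0 = 0 \<Longrightarrow>
    branch_label (scale_reparam \<rho> \<sigma> (P, Q, 1)) = Affine (P $ 0) (Q $ 0)"
  by (simp add: scale_reparam_def branch_label_def)

lemma branch_label_scale_reparam_infinite:
  fixes \<rho> \<sigma> R :: "'a::field fps"
  assumes "\<rho> $ 0 \<noteq> 0" "\<sigma> $ 0 = 0" "\<sigma> \<noteq> 0"
  shows "branch_label (scale_reparam \<rho> \<sigma> (fps_X * R, 1, fps_X)) = Inf_Y (R $ 0)"
    "branch_label (scale_reparam \<rho> \<sigma> (1, fps_X * R, fps_X)) = Inf_X (R $ 0)"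
proof -
  have "\<rho> * \<sigma> \<noteq> 0" using assms(1,3) by auto
  hence "leading_ratio (\<rho> * \<sigma> * (R oo \<sigma>)) (\<rho> * \<sigma>) = R $ 0"
    using leading_ratio_mult[of "\<rho> * \<sigma>" "R oo \<sigma>"] assms(2) by simp
  thus "branch_label (scale_reparam \<rho> \<sigma> (fps_X * R, 1, fps_X)) = Inf_Y (R $ 0)"
    "branch_label (scale_reparam \<rho> \<sigma> (1, fps_X * R, fps_X)) = Inf_X (R $ 0)"
    using assms(1,2)
    by (simp_all add: scale_reparam_def branch_label_def fps_compose_mult_distrib mult_ac)
qed

context
  fixes a b c :: "'a::field" and N :: nat
  assumes a: "a \<noteq> 0" and b: "b \<noteq> 0" and c: "c \<noteq> 0" and abc: "a + b * c \<noteq> 0"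
    and N: "of_nat N \<noteq> (0::'a)"
begin

lemma abc_swap: "a + c * b \<noteq> 0"
  using abc by (simp add: mult.commute)

lemma affine_point_nonzero: "affine_point a b c N x y \<Longrightarrow> x \<noteq> 0 \<or> y \<noteq> 0"
  using N_pos[OF a c N] by (auto simp: affine_point_def power_0_left)

lemma affine_centred_normal_form:
  assumes "branch_rep (curve_F a b c N N) (X, Y, Z)" and Z0: "Z $ 0 \<noteq> 0"
  shows "branch_label (X, Y, Z) \<in> branch_labels a b c N \<and> (\<exists>\<rho> \<sigma>. \<rho> $ 0 \<noteq> 0 \<and> \<sigma> $ 0 = 0 \<and>
    (X, Y, Z) = scale_reparam \<rho> \<sigma> (standard_branch a b c N (branch_label (X, Y, Z))))"
proof -
  let ?x = "X $ 0 / Z $ 0" and ?y = "Y $ 0 / Z $ 0"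
  have curve: "curve_F a b c N N X Y Z = 0" and curve': "curve_F a c b N N Y X Z = 0"
    using assms(1) curve_F_swap[of a c b N Y X Z] by (simp_all add: branch_rep_def)
  have on: "affine_point a b c N ?x ?y" by (rule affine_point_of_curve[OF curve Z0])
  have label: "branch_label (X, Y, Z) = Affine ?x ?y"
    using Z0 by (simp add: branch_label_def)
  have "\<exists>\<sigma>. \<sigma> $ 0 = 0 \<and> (X, Y, Z) = scale_reparam Z \<sigma> (standard_branch a b c N (Affine ?x ?y))"
  proof (cases "Y $ 0 = 0")
    case False
    thus ?thesis using affine_normal_form[OF abc N curve Z0] Z0 by (simp add: standard_branch_def)
  next
    case True
    hence "X $ 0 \<noteq> 0" using on affine_point_nonzero[of ?x ?y] by auto
    then obtain \<sigma> where "\<sigma> $ 0 = 0" "(Y, X, Z) = scale_reparam Z \<sigma> (affine_branch a c b N ?y ?x)"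
      using affine_normal_form[OF abc_swap N curve' Z0] by auto
    moreover have "(X, Y, Z) = swap_xy (Y, X, Z)" by (simp add: swap_xy_def)
    ultimately show ?thesis
      using True by (auto simp: standard_branch_def scale_reparam_swap_xy)
  qed
  thus ?thesis using on Z0 unfolding label branch_labels_def by blast
qed

lemma infinite_centred_normal_form:
  assumes "branch_rep (curve_F a b c N N) (X, Y, Z)" and Z0: "Z $ 0 = 0"
  shows "branch_label (X, Y, Z) \<in> branch_labels a b c N \<and> (\<exists>\<rho> \<sigma>. \<rho> $ 0 \<noteq> 0 \<and> \<sigma> $ 0 = 0 \<and>
    (X, Y, Z) = scale_reparam \<rho> \<sigma> (standard_branch a b c N (branch_label (X, Y, Z))))"
proof -
  have curve: "curve_F a b c N N X Y Z = 0" and curve': "curve_F a c b N N Y X Z = 0"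
    and nonconst: "\<not> constant_point (X, Y, Z)" "\<not> constant_point (Y, X, Z)"
    and "X $ 0 \<noteq> 0 \<or> Y $ 0 \<noteq> 0"
    using assms curve_F_swap[of a c b N Y X Z]
    by (auto simp: branch_rep_def normalised_triple_def constant_point_def)
  show ?thesis
  proof (cases "Y $ 0 = 0")
    case False
    hence "branch_label (X, Y, Z) = Inf_Y (leading_ratio X Z)"
      using Z0 by (simp add: branch_label_def)
    thus ?thesis
      using infinite_normal_form[OF a c N curve False Z0 nonconst(1)] False
      unfolding branch_labels_def by (auto simp: standard_branch_def)
  next
    case True
    hence "X $ 0 \<noteq> 0" using \<open>X $ 0 \<noteq> 0 \<or> Y $ 0 \<noteq> 0\<close> by simp
    note swapped = infinite_normal_form[OF a b N curve' this Z0 nonconst(2)]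
    obtain \<sigma> where "\<sigma> $ 0 = 0"
      "(Y, X, Z) = scale_reparam X \<sigma> (infinite_branch a c b N (leading_ratio Y Z))"
      using swapped(2) by blast
    moreover have "(X, Y, Z) = swap_xy (Y, X, Z)" by (simp add: swap_xy_def)
    ultimately have "(X, Y, Z) = scale_reparam X \<sigma> (standard_branch a b c N (Inf_X (leading_ratio Y Z)))"
      by (simp add: standard_branch_def scale_reparam_swap_xy)
    moreover have "branch_label (X, Y, Z) = Inf_X (leading_ratio Y Z)"
      using Z0 True by (simp add: branch_label_def)
    ultimately show ?thesis
      using \<open>\<sigma> $ 0 = 0\<close> \<open>X $ 0 \<noteq> 0\<close> swapped(1) unfolding branch_labels_def by auto
  qed
qed

lemma branch_normal_form:
  assumes "branch_rep (curve_F a b c N N) r"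
  shows "branch_label r \<in> branch_labels a b c N \<and> (\<exists>\<rho> \<sigma>. \<rho> $ 0 \<noteq> 0 \<and> \<sigma> $ 0 = 0 \<and>
    r = scale_reparam \<rho> \<sigma> (standard_branch a b c N (branch_label r)))"
  using assms affine_centred_normal_form infinite_centred_normal_form
  by (cases r) (metis (no_types))

lemma standard_branch_rep:
  assumes "l \<in> branch_labels a b c N"
  shows "branch_rep (curve_F a b c N N) (standard_branch a b c N l) \<and>
    primitive_rep (standard_branch a b c N l)"
proof -
  consider (affine) x y where "l = Affine x y" "affine_point a b c N x y"
    | (inf_Y) t where "l = Inf_Y t" "a * t ^ N + c = 0"
    | (inf_X) t where "l = Inf_X t" "a * t ^ N + b = 0"
    using assms unfolding branch_labels_def by blast
  thus ?thesis
  proof cases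
    case affine
    show ?thesis
    proof (cases "y = 0")
      case True
      hence "affine_point a c b N y x" "x \<noteq> 0"
        using affine(2) affine_point_nonzero by (auto simp: affine_point_swap)
      thus ?thesis using affine_branch_rep[OF abc_swap N] True
        by (simp add: affine(1) standard_branch_def branch_rep_swap_xy primitive_rep_swap_xy)
    qed (use affine affine_branch_rep[OF abc N] in \<open>simp add: standard_branch_def\<close>)
  next
    case inf_Y
    thus ?thesis using infinite_branch_rep[OF a c N] by (simp add: standard_branch_def)
  next
    case inf_X
    thus ?thesis using infinite_branch_rep[OF a b N]
      by (simp add: standard_branch_def branch_rep_swap_xy primitive_rep_swap_xy)
  qed
qed

lemma branch_label_standard:
  assumes "l \<in> branch_labels a b c N" and \<rho>0: "\<rho> $ 0 \<noteq> 0" and \<sigma>0: "\<sigma> $ 0 = 0"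
    and nonconst: "\<not> constant_point (scale_reparam \<rho> \<sigma> (standard_branch a b c N l))"
  shows "branch_label (scale_reparam \<rho> \<sigma> (standard_branch a b c N l)) = l"
proof -
  have "\<sigma> \<noteq> 0"
    using nonconst \<rho>0 constant_point_iff_scale_reparam_0 by blast
  consider (affine) x y where "l = Affine x y" "affine_point a b c N x y"
    | (inf_Y) t where "l = Inf_Y t" "a * t ^ N + c = 0"
    | (inf_X) t where "l = Inf_X t" "a * t ^ N + b = 0"
    using assms(1) unfolding branch_labels_def by blast
  thus ?thesis
  proof cases
    case affine
    show ?thesis
    proof (cases "y = 0")
      case True
      hence "affine_point a c b N y x" "x \<noteq> 0"
        using affine(2) affine_point_nonzero by (auto simp: affine_point_swap)
      note root = affine_branch_root(2)[OF abc_swap N this]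
      show ?thesis
        using root branch_label_scale_reparam_affine[OF \<rho>0 \<sigma>0] True
        by (simp add: affine(1) standard_branch_def affine_branch_def swap_xy_def)
    next
      case False
      thus ?thesis
        using affine_branch_root(2)[OF abc N affine(2)] branch_label_scale_reparam_affine[OF \<rho>0 \<sigma>0]
        by (simp add: affine(1) standard_branch_def affine_branch_def)
    qed
  next
    case inf_Y
    thus ?thesis
      using infinite_branch_root(2)[OF a c N] branch_label_scale_reparam_infinite(1)[OF \<rho>0 \<sigma>0 \<open>\<sigma> \<noteq> 0\<close>]
      by (simp add: standard_branch_def infinite_branch_def)
  next
    case inf_X
    thus ?thesis
      using infinite_branch_root(2)[OF a b N] branch_label_scale_reparam_infinite(2)[OF \<rho>0 \<sigma>0 \<open>\<sigma> \<noteq> 0\<close>]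
      by (simp add: standard_branch_def infinite_branch_def swap_xy_def)
  qed
qed

lemma card_rational_branches_curve_F:
  "card (rational_branches (curve_F a b c N N)) = card (branch_labels a b c N)"
proof -
  interpret branch_classification "curve_F a b c N N" branch_label "standard_branch a b c N"
    "branch_labels a b c N"
    using branch_normal_form standard_branch_rep branch_label_standard by unfold_locales blast+
  show ?thesis by (rule card_rational_branches)
qed

end

section \<open>Counting over finite fields\<close>

text \<open>The library's \<open>finite_field_power_card_eq_same\<close> is stated for the type class
  \<open>finite_field\<close>, not for the sort \<open>{finite, field}\<close>.\<close>
lemma finite_field_power_card_minus_1:
  fixes x :: "'a::{finite,field}"
  assumes "x \<noteq> 0"
  shows "x ^ (card (UNIV :: 'a set) - 1) = 1"
proof -
  define U where "U = (UNIV - {0} :: 'a set)"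
  have bij: "bij_betw ((*) x) U U"
    using assms by (intro bij_betw_byWitness[of _ "\<lambda>y. y / x"]) (auto simp: U_def)
  have "(\<Prod>y\<in>U. x * y) = \<Prod>U"
    using prod.reindex_bij_betw[OF bij, of "\<lambda>y. y"] by simp
  moreover have "(\<Prod>y\<in>U. x * y) = x ^ card U * \<Prod>U"
    by (simp add: prod.distrib)
  moreover have "\<Prod>U \<noteq> 0" and "card U = card (UNIV :: 'a set) - 1"
    by (simp_all add: U_def card_Diff_singleton)
  ultimately show ?thesis by simp
qed

lemma card_power_eq_le:
  fixes w :: "'a::field"
  assumes "k > 0"
  shows "card {x. x ^ k = w} \<le> k"
proof -
  define P where "P = Polynomial.monom (1::'a) k + [:-w:]"
  have "degree P = k" using assms
    by (simp add: P_def degree_add_eq_left degree_monom_eq)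
  moreover have "{x. x ^ k = w} = {x. poly P x = 0}"
    by (simp add: P_def poly_monom add_eq_0_iff2)
  moreover have "P \<noteq> 0" using \<open>degree P = k\<close> assms by auto
  ultimately show ?thesis
    using card_poly_roots_bound[of P] by simp
qed

text \<open>Counting argument: the \<open>N\<close>-th power map sends the \<open>N * d\<close> nonzero elements into the
  \<open>d\<close>-th roots of unity, of which there are at most \<open>d\<close>, with fibres of size at most \<open>N\<close>.\<close>
lemma card_power_fibres:
  fixes N d :: nat
  assumes Nd: "N * d = card (UNIV :: 'a::{finite,field} set) - 1"
  shows "card {u::'a. u ^ d = 1} = d" "\<And>w::'a. w ^ d = 1 \<Longrightarrow> card {x. x ^ N = w} = N"
proof -
  define U where "U = {u::'a. u ^ d = 1}"
  define fibre where "fibre w = {x::'a. x ^ N = w}" for w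
  have "card (UNIV :: 'a set) \<ge> 2"
    using card_mono[of UNIV "{0, 1::'a}"] by simp
  hence pos: "N > 0" "d > 0" using Nd by (auto intro: gr0I)
  have cover: "UNIV - {0::'a} = (\<Union>w\<in>U. fibre w)"
  proof
    have "(x ^ N) ^ d = 1" if "x \<noteq> 0" for x :: 'a
      using finite_field_power_card_minus_1[OF that] by (simp add: Nd flip: power_mult)
    thus "UNIV - {0} \<subseteq> (\<Union>w\<in>U. fibre w)" by (auto simp: U_def fibre_def)
    show "(\<Union>w\<in>U. fibre w) \<subseteq> UNIV - {0}"
      using pos by (auto simp: U_def fibre_def power_0_left)
  qed
  have "card (UNIV - {0::'a}) = (\<Sum>w\<in>U. card (fibre w))"
    unfolding cover by (rule card_UN_disjoint) (auto simp: fibre_def)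
  hence total: "(\<Sum>w\<in>U. card (fibre w)) = N * d"
    using Nd by (simp add: card_Diff_singleton)
  have le: "card (fibre w) \<le> N" for w :: 'a
    using card_power_eq_le[OF pos(1)] by (simp add: fibre_def)
  have "card U \<le> d"
    using card_power_eq_le[OF pos(2)] by (simp add: U_def)
  have "N * d \<le> card U * N"
    using sum_mono[of U "\<lambda>w. card (fibre w)" "\<lambda>_. N"] le total by simp
  hence "d \<le> card U" using pos(1) by (simp add: mult.commute)
  with \<open>card U \<le> d\<close> show cardU: "card {u::'a. u ^ d = 1} = d"
    by (simp add: U_def)
  show "card {x. x ^ N = w} = N" if "w ^ d = 1" for w :: 'a
  proof (rule ccontr)
    assume "card {x. x ^ N = w} \<noteq> N"
    hence "card (fibre w) < N" using le[of w] by (simp add: fibre_def)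
    moreover have "w \<in> U" using that by (simp add: U_def)
    ultimately have "(\<Sum>w\<in>U. card (fibre w)) < (\<Sum>w\<in>U. N)"
      using le by (intro sum_strict_mono_ex1) auto
    thus False using total cardU by (simp add: U_def)
  qed
qed

lemma frobenius_diff:
  fixes x y :: "'a::comm_ring_1"
  assumes "prime CHAR('a)" "Q = CHAR('a) ^ r"
  shows "(x - y) ^ Q = x ^ Q - y ^ Q"
  using freshmans_dream'[OF assms, of "x - y" y] by (simp add: eq_diff_eq)

lemma frobenius_uminus:
  fixes x :: "'a::comm_ring_1"
  assumes "prime CHAR('a)" "Q = CHAR('a) ^ r"
  shows "(- x) ^ Q = - (x ^ Q)"
  using frobenius_diff[OF assms, of 0 x] assms by (simp add: power_0_left prime_gt_0_nat)

definition frobenius_fixed_units :: "nat \<Rightarrow> 'a::field set" where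
  "frobenius_fixed_units Q = {u. u \<noteq> 0 \<and> u ^ Q = u}"

lemma frobenius_fixed_units_eq:
  fixes Q :: nat
  assumes "Q > 1"
  shows "frobenius_fixed_units Q = {u::'a::field. u ^ (Q - 1) = 1}"
proof -
  obtain k where Q: "Q = Suc k" using assms by (cases Q) auto
  have "u \<noteq> 0 \<and> u ^ Q = u \<longleftrightarrow> u ^ (Q - 1) = 1" for u :: 'a
    using assms by (cases "u = 0") (simp_all add: Q power_0_left)
  thus ?thesis unfolding frobenius_fixed_units_def by blast
qed

lemma frobenius_fixed_units_moebius:
  fixes a b c v :: "'a::field"
  assumes char: "prime CHAR('a)" "Q = CHAR('a) ^ r" and fixed: "a ^ Q = a" "b ^ Q = b" "c ^ Q = c"
    and "v \<in> frobenius_fixed_units Q" "a * v + b \<noteq> 0" "1 - c * v \<noteq> 0"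
  shows "(1 - c * v) / (a * v + b) \<in> frobenius_fixed_units Q"
  using assms freshmans_dream'[OF char] frobenius_diff[OF char]
  by (simp add: frobenius_fixed_units_def power_divide power_mult_distrib)

text \<open>The conic \<open>a u v + b u + c v = 1\<close> is the graph of \<open>v \<mapsto> (1 - c v) / (a v + b)\<close>, which
  maps the fixed field to itself; only \<open>v = -b/a\<close> (a pole) and \<open>v = 1/c\<close> (a zero) are lost.\<close>
lemma card_conic_frobenius_fixed_units:
  fixes a b c :: "'a::{finite,field}"
  assumes char: "prime CHAR('a)" "Q = CHAR('a) ^ r"
    and a: "a \<noteq> 0" and b: "b \<noteq> 0" and c: "c \<noteq> 0" and abc: "a + b * c \<noteq> 0"
    and fixed: "a ^ Q = a" "b ^ Q = b" "c ^ Q = c"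
  shows "card {(u, v). u \<in> frobenius_fixed_units Q \<and> v \<in> frobenius_fixed_units Q \<and>
      a * u * v + b * u + c * v = 1} = card (frobenius_fixed_units Q :: 'a set) - 2"
proof -
  define K where "K = (frobenius_fixed_units Q :: 'a set)"
  define f where "f v = ((1 - c * v) / (a * v + b), v)" for v
  have poles: "- b / a \<in> K" "1 / c \<in> K" "- b / a \<noteq> 1 / c"
    using a b c abc fixed frobenius_uminus[OF char]
    by (auto simp: K_def frobenius_fixed_units_def power_divide field_simps
        simp flip: minus_mult_left)
  have "{(u, v). u \<in> K \<and> v \<in> K \<and> a * u * v + b * u + c * v = 1} = f ` (K - {- b / a, 1 / c})"
  proof (intro equalityI subsetI)
    fix uv assume "uv \<in> {(u, v). u \<in> K \<and> v \<in> K \<and> a * u * v + b * u + c * v = 1}"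
    then obtain u v where uv: "uv = (u, v)" "u \<in> K" "v \<in> K" and eq: "u * (a * v + b) = 1 - c * v"
      by (auto simp: algebra_simps)
    have "u \<noteq> 0" using uv(2) by (simp add: K_def frobenius_fixed_units_def)
    have "a * v + b \<noteq> 0"
      using eq poles(3) a c by (auto simp: field_simps add_eq_0_iff2)
    moreover have "v \<noteq> 1 / c" using eq \<open>u \<noteq> 0\<close> calculation c by auto
    ultimately show "uv \<in> f ` (K - {- b / a, 1 / c})"
      using uv eq a by (auto simp: f_def field_simps intro!: image_eqI[of _ _ v])
  next
    fix uv assume "uv \<in> f ` (K - {- b / a, 1 / c})"
    then obtain v where v: "v \<in> K" "v \<noteq> - b / a" "v \<noteq> 1 / c" and uv: "uv = f v" by auto
    have "a * v + b \<noteq> 0" using v(2) a by (auto simp: field_simps eq_neg_iff_add_eq_0)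
    moreover have "1 - c * v \<noteq> 0" using v(3) c by (auto simp: field_simps)
    ultimately have "(1 - c * v) / (a * v + b) \<in> K"
      using frobenius_fixed_units_moebius[OF char fixed] v(1) by (simp add: K_def)
    moreover have "a * u * v + b * u + c * v = 1" if "u = (1 - c * v) / (a * v + b)" for u
    proof -
      have "a * u * v + b * u + c * v = u * (a * v + b) + c * v" by (simp add: algebra_simps)
      thus ?thesis using that \<open>a * v + b \<noteq> 0\<close> by simp
    qed
    ultimately show "uv \<in> {(u, v). u \<in> K \<and> v \<in> K \<and> a * u * v + b * u + c * v = 1}"
      using v(1) by (simp add: uv f_def)
  qed
  moreover have "inj_on f (K - {- b / a, 1 / c})" by (rule inj_onI) (simp add: f_def)
  ultimately show ?thesis
    using poles by (simp add: K_def card_image card_Diff_subset)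
qed

lemma card_Un3_disjoint:
  assumes "finite A" "finite B" "finite C" "A \<inter> B = {}" "(A \<union> B) \<inter> C = {}"
  shows "card (A \<union> B \<union> C) = card A + card B + card C"
  using assms by (simp add: card_Un_disjoint)

lemma card_affine_points_nonzero:
  fixes a b c :: "'a::{finite,field}" and K :: "'a set"
  assumes fibre: "\<And>w. w \<in> K \<Longrightarrow> card {x. x ^ N = w} = N"
    and power: "\<And>x. x \<noteq> 0 \<Longrightarrow> x ^ N \<in> K" and "0 \<notin> K" "N > 0"
  shows "card {(x, y). affine_point a b c N x y \<and> x \<noteq> 0 \<and> y \<noteq> 0} =
    card {(u, v). u \<in> K \<and> v \<in> K \<and> a * u * v + b * u + c * v = 1} * N ^ 2"
proof -
  define C where "C = {(u, v). u \<in> K \<and> v \<in> K \<and> a * u * v + b * u + c * v = 1}"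
  define G where "G uv = {x. x ^ N = fst uv} \<times> {y. y ^ N = snd uv}" for uv :: "'a \<times> 'a"
  have "{(x, y). affine_point a b c N x y \<and> x \<noteq> 0 \<and> y \<noteq> 0} = (\<Union>uv\<in>C. G uv)"
  proof (intro equalityI subsetI)
    fix xy assume "xy \<in> {(x, y). affine_point a b c N x y \<and> x \<noteq> 0 \<and> y \<noteq> 0}"
    then obtain x y where "xy = (x, y)" "affine_point a b c N x y" "x \<noteq> 0" "y \<noteq> 0" by blast
    hence "(x ^ N, y ^ N) \<in> C" "xy \<in> G (x ^ N, y ^ N)"
      using power by (auto simp: C_def G_def affine_point_def power_mult_distrib mult.assoc)
    thus "xy \<in> (\<Union>uv\<in>C. G uv)" by blast
  next
    fix xy assume "xy \<in> (\<Union>uv\<in>C. G uv)"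
    then obtain x y u v where "xy = (x, y)" "(u, v) \<in> C" "x ^ N = u" "y ^ N = v"
      by (auto simp: G_def)
    thus "xy \<in> {(x, y). affine_point a b c N x y \<and> x \<noteq> 0 \<and> y \<noteq> 0}"
      using assms(3,4) by (auto simp: C_def affine_point_def power_mult_distrib mult.assoc power_0_left)
  qed
  moreover have "card (\<Union>uv\<in>C. G uv) = (\<Sum>uv\<in>C. card (G uv))"
    by (rule card_UN_disjoint) (auto simp: G_def)
  moreover have "card (G uv) = N ^ 2" if "uv \<in> C" for uv
    using that fibre by (auto simp: C_def G_def card_cartesian_product power2_eq_square)
  ultimately show ?thesis by (simp add: C_def)
qed

context
  fixes a b c :: "'a::{finite,field}" and N Q r :: nat
  assumes char: "prime CHAR('a)" "Q = CHAR('a) ^ r" and Q1: "Q > 1"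
    and NQ: "N * (Q - 1) = card (UNIV :: 'a set) - 1"
    and a: "a \<noteq> 0" and b: "b \<noteq> 0" and c: "c \<noteq> 0" and abc: "a + b * c \<noteq> 0"
    and fixed: "a ^ Q = a" "b ^ Q = b" "c ^ Q = c"
begin

abbreviation K :: "'a set" where "K \<equiv> frobenius_fixed_units Q"

lemma card_frobenius_fixed_units: "card K = Q - 1"
  using card_power_fibres(1)[OF NQ] frobenius_fixed_units_eq[OF Q1, where 'a='a] by simp

lemma card_power_eq_fixed_unit: "w \<in> K \<Longrightarrow> card {x. x ^ N = w} = N"
  using card_power_fibres(2)[OF NQ] frobenius_fixed_units_eq[OF Q1, where 'a='a] by auto

lemma power_in_frobenius_fixed_units:
  assumes "x \<noteq> 0"
  shows "x ^ N \<in> K"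
proof -
  have "(x ^ N) ^ (Q - 1) = x ^ (card (UNIV :: 'a set) - 1)"
    by (simp only: power_mult[symmetric] NQ)
  thus ?thesis
    using finite_field_power_card_minus_1[OF assms] frobenius_fixed_units_eq[OF Q1, where 'a='a] by simp
qed

lemma quotients_in_frobenius_fixed_units: "- c / a \<in> K" "- b / a \<in> K" "1 / c \<in> K" "1 / b \<in> K"
  using a b c fixed frobenius_uminus[OF char]
  by (simp_all add: frobenius_fixed_units_def power_divide)

lemma N_gt_0: "N > 0"
proof -
  have "card (UNIV :: 'a set) \<ge> 2" using card_mono[of UNIV "{0, 1::'a}"] by simp
  thus ?thesis using NQ by (cases N) auto
qed

lemma card_power_eq_quotient:
  assumes "e \<noteq> 0" "- e / a \<in> K"
  shows "card {t. a * t ^ N + e = 0} = N"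
proof -
  have "{t. a * t ^ N + e = 0} = {t. t ^ N = - e / a}"
    using a by (auto simp: field_simps add_eq_0_iff2)
  thus ?thesis using card_power_eq_fixed_unit[OF assms(2)] by simp
qed

lemma card_affine_points: "card {(x, y). affine_point a b c N x y} = (Q - 3) * N ^ 2 + 2 * N"
proof -
  have split: "{(x, y). affine_point a b c N x y} = (\<lambda>y. (0::'a, y)) ` {y. y ^ N = 1 / c}
      \<union> (\<lambda>x. (x, 0::'a)) ` {x. x ^ N = 1 / b}
      \<union> {(x, y). affine_point a b c N x y \<and> x \<noteq> 0 \<and> y \<noteq> 0}"
    using N_gt_0 b c by (auto simp: affine_point_def power_0_left field_simps)
  have "card {(x, y). affine_point a b c N x y} = card ((\<lambda>y. (0::'a, y)) ` {y. y ^ N = 1 / c})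
      + card ((\<lambda>x. (x, 0::'a)) ` {x. x ^ N = 1 / b})
      + card {(x, y). affine_point a b c N x y \<and> x \<noteq> 0 \<and> y \<noteq> 0}"
    unfolding split by (rule card_Un3_disjoint) (use N_gt_0 b in \<open>auto simp: power_0_left\<close>)
  also have "\<dots> = N + N + (Q - 3) * N ^ 2"
  proof -
    have "card ((\<lambda>y. (0::'a, y)) ` {y. y ^ N = 1 / c}) = N"
      using card_power_eq_fixed_unit[OF quotients_in_frobenius_fixed_units(3)] by (subst card_image) (auto intro: inj_onI)
    moreover have "card ((\<lambda>x. (x, 0::'a)) ` {x. x ^ N = 1 / b}) = N"
      using card_power_eq_fixed_unit[OF quotients_in_frobenius_fixed_units(4)] by (subst card_image) (auto intro: inj_onI)
    moreover have "0 \<notin> K" by (simp add: frobenius_fixed_units_def)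
    hence "card {(x, y). affine_point a b c N x y \<and> x \<noteq> 0 \<and> y \<noteq> 0} =
        card {(u, v). u \<in> K \<and> v \<in> K \<and> a * u * v + b * u + c * v = 1} * N ^ 2"
      using card_power_eq_fixed_unit power_in_frobenius_fixed_units N_gt_0 by (intro card_affine_points_nonzero) auto
    moreover have "card {(u, v). u \<in> K \<and> v \<in> K \<and> a * u * v + b * u + c * v = 1} = Q - 3"
      using card_conic_frobenius_fixed_units[OF char a b c abc fixed] card_frobenius_fixed_units by simp
    ultimately show ?thesis by simp
  qed
  finally show ?thesis by simp
qed

lemma card_branch_labels: "card (branch_labels a b c N) = N ^ 2 * (Q - 3) + 4 * N"
proof -
  have split: "branch_labels a b c N = (\<lambda>(x, y). Affine x y) ` {(x, y). affine_point a b c N x y}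
      \<union> Inf_Y ` {t. a * t ^ N + c = 0} \<union> Inf_X ` {t. a * t ^ N + b = 0}"
    unfolding branch_labels_def by auto
  have "card (branch_labels a b c N) = card ((\<lambda>(x, y). Affine x y) ` {(x, y). affine_point a b c N x y})
      + card (Inf_Y ` {t. a * t ^ N + c = 0}) + card (Inf_X ` {t. a * t ^ N + b = 0})"
    unfolding split by (rule card_Un3_disjoint) auto
  also have "\<dots> = card {(x, y). affine_point a b c N x y}
      + card {t. a * t ^ N + c = 0} + card {t. a * t ^ N + b = 0}"
  proof -
    have "inj_on (\<lambda>(x, y). Affine x y) A" "inj_on Inf_Y A'" "inj_on Inf_X A'"
      for A :: "('a \<times> 'a) set" and A' :: "'a set" by (auto intro: inj_onI)
    thus ?thesis by (simp add: card_image)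
  qed
  finally show ?thesis
    using card_affine_points card_power_eq_quotient[OF c quotients_in_frobenius_fixed_units(1)]
      card_power_eq_quotient[OF b quotients_in_frobenius_fixed_units(2)]
    by (simp add: algebra_simps)
qed

end

lemma CHAR_eq_if_card_eq_prime_power:
  assumes "card (UNIV :: 'a::{finite,field} set) = p ^ h" "prime p" "h > 0"
  shows "CHAR('a) = p"
proof -
  have "prime CHAR('a)"
    by (intro prime_CHAR_semidom finite_imp_CHAR_pos) simp
  moreover have "CHAR('a) dvd p ^ h" using CHAR_dvd_CARD[where 'a='a] assms(1) by simp
  ultimately show ?thesis
    using assms(2) prime_dvd_power primes_dvd_imp_eq by blast
qed

lemma of_nat_eq_1_if_mult_pred_card:
  assumes "N * (Q - 1) = card (UNIV :: 'a::{finite,field} set) - 1" "of_nat Q = (0::'a)" "Q > 0"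
  shows "of_nat N = (1::'a)"
proof -
  have "of_nat (card (UNIV :: 'a set)) = (0::'a)"
    using CHAR_dvd_CARD[where 'a='a] by (simp add: of_nat_eq_0_iff_char_dvd)
  hence "of_nat (N * (Q - 1)) = (- 1 :: 'a)"
    using assms(1) finite_UNIV_card_ge_0[where 'a='a] by (simp add: of_nat_diff)
  thus ?thesis using assms(2,3) by (simp add: of_nat_diff)
qed

lemma power_pred_dvd_power_pred:
  fixes x :: nat
  assumes "r dvd h"
  shows "(x ^ r - 1) dvd (x ^ h - 1)"
proof (cases "x = 0")
  case False
  obtain k where "h = r * k" using assms by blast
  have "int (x ^ r) ^ k - 1 = (int (x ^ r) - 1) * (\<Sum>i<k. int (x ^ r) ^ i)"
    by (rule power_diff_1_eq)
  hence "int (x ^ r - 1) dvd int (x ^ h - 1)"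
    using False \<open>h = r * k\<close> by (simp add: of_nat_diff power_mult)
  thus ?thesis by simp
qed (cases r; cases h; simp)

theorem proposition4p14:
  fixes a b c :: "'a::{finite,field}" and p h r n m :: nat
  assumes "prime p" and "p > 5"
    and "card (UNIV :: 'a set) = p ^ h"
    and "a \<noteq> 0" and "b \<noteq> 0" and "c \<noteq> 0" and "c \<noteq> - (a / b)"
    and "r < h" and "r dvd h"
    and "n = (p ^ h - 1) div (p ^ r - 1)" and "m = n"
    and "a ^ (p ^ r) = a" and "b ^ (p ^ r) = b" and "c ^ (p ^ r) = c"
  shows "Nq (curve_F a b c n m) = n ^ 2 * (p ^ r - 3) + 4 * n"
proof -
  have "r > 0" using assms(8,9) by (cases r) auto
  have char: "CHAR('a) = p" using CHAR_eq_if_card_eq_prime_power[OF assms(3,1)] assms(8) by simp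
  have Q1: "p ^ r > 1" using one_less_power[OF prime_gt_1_nat[OF assms(1)] \<open>r > 0\<close>] .
  have NQ: "n * (p ^ r - 1) = card (UNIV :: 'a set) - 1"
    using power_pred_dvd_power_pred[OF assms(9), of p] assms(3,10) by simp
  have "of_nat n = (1::'a)"
    using \<open>r > 0\<close> char Q1 prime_gt_0_nat[OF assms(1)]
    by (intro of_nat_eq_1_if_mult_pred_card[OF NQ]) (simp_all add: of_nat_eq_0_iff_char_dvd)
  hence N: "of_nat n \<noteq> (0::'a)" by simp
  have abc: "a + b * c \<noteq> 0"
    using assms(5,7) by (auto simp: field_simps eq_neg_iff_add_eq_0)
  have "Nq (curve_F a b c n m) = card (branch_labels a b c n)"
    using card_rational_branches_curve_F[OF assms(4-6) abc N] assms(11) by (simp add: Nq_def)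
  also have "\<dots> = n ^ 2 * (p ^ r - 3) + 4 * n"
    using card_branch_labels[OF _ _ Q1 NQ assms(4-6) abc assms(12-14)] assms(1) char by simp
  finally show ?thesis .
qed

end
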